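(* Let $n$ be a positive integer, let $\lambda$ be a partition with at most $n$ nonzero parts, and let $\beta$ be a nonzero complex number. Then $$G_\lambda(\beta,\beta,\dots,\beta\mid -\beta^{-1})=\beta^{|\lambda|},$$ where all $n$ variables are specialized to $\beta$.
   Context: A partition $\lambda$ is identified with its Young diagram $\{(i,j)\in\mathbb{Z}_{>0}^2 : j\le\lambda_i\}$ and $|\lambda|=\sum_i\lambda_i$. A set-valued tableau of shape $\lambda$ with entries in $[n]=\{1,\dots,n\}$ assigns a non-empty subset $T_{i,j}\subseteq[n]$ to each box $(i,j)\in\lambda$ such that $\max T_{i,j}\le\min T_{i,j+1}$ whenever $(i,j),(i,j+1)\in\lambda$ and $\max T_{i,j}<\min T_{i+1,j}$ whenever $(i,j),(i+1,j)\in\lambda$; $\mathrm{SVT}(\lambda,n)$ is the set of these. For such $T$, $|T|=\sum_{(i,j)}|T_{i,j}|$, $\omega_k(T)$ is the number of boxes whose set contains $k$, and $x^{\omega(T)}=\prod_{k=1}^n x_k^{\omega_k(T)}$. The stable Grothendieck polynomial is $G_\lambda(x_1,\dots,x_n\mid\beta)=\sum_{T\in\mathrm{SVT}(\lambda,n)}\beta^{|T|-|\lambda|}x^{\omega(T)}$. *)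

theory Defs
  imports Complex_Main
begin

text \<open>A partition is a weakly decreasing list of positive integers
  (its nonzero parts). Its number of nonzero parts is its length.\<close>
definition is_partition :: "nat list \<Rightarrow> bool" where
  "is_partition lam \<longleftrightarrow> sorted_wrt (\<ge>) lam \<and> (\<forall>p\<in>set lam. 0 < p)"

definition young :: "nat list \<Rightarrow> (nat \<times> nat) set" where
  "young lam = {(i, j). 1 \<le> i \<and> i \<le> length lam \<and> 1 \<le> j \<and> j \<le> lam ! (i - 1)}"

definition psize :: "nat list \<Rightarrow> nat" where
  "psize lam = sum_list lam"

text \<open>Set-valued tableaux of shape lam with entries in {1..n}; boxes outside the
  diagram are assigned the empty set (canonical representative).\<close>
definition SVT :: "nat list \<Rightarrow> nat \<Rightarrow> ((nat \<times> nat) \<Rightarrow> nat set) set" where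
  "SVT lam n = {T.
     (\<forall>b\<in>young lam. T b \<noteq> {} \<and> T b \<subseteq> {1..n}) \<and>
     (\<forall>b. b \<notin> young lam \<longrightarrow> T b = {}) \<and>
     (\<forall>i j. (i, j) \<in> young lam \<and> (i, j + 1) \<in> young lam \<longrightarrow>
            Max (T (i, j)) \<le> Min (T (i, j + 1))) \<and>
     (\<forall>i j. (i, j) \<in> young lam \<and> (i + 1, j) \<in> young lam \<longrightarrow>
            Max (T (i, j)) < Min (T (i + 1, j)))}"

definition tsize :: "nat list \<Rightarrow> ((nat \<times> nat) \<Rightarrow> nat set) \<Rightarrow> nat" where
  "tsize lam T = (\<Sum>b\<in>young lam. card (T b))"

definition omega :: "nat list \<Rightarrow> ((nat \<times> nat) \<Rightarrow> nat set) \<Rightarrow> nat \<Rightarrow> nat" where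
  "omega lam T k = card {b \<in> young lam. k \<in> T b}"

definition stableG :: "nat list \<Rightarrow> nat \<Rightarrow> (nat \<Rightarrow> complex) \<Rightarrow> complex \<Rightarrow> complex" where
  "stableG lam n x \<beta> =
     (\<Sum>T\<in>SVT lam n. \<beta> ^ (tsize lam T - psize lam) * (\<Prod>k=1..n. x k ^ omega lam T k))"

end

theory Submission
  imports Defs "HOL-Library.Disjoint_Sets"
begin

text \<open>With all \<open>x\<^sub>k = \<beta>\<close> and parameter \<open>-1/\<beta>\<close>, the term of a tableau \<open>T\<close> becomes
  \<open>\<beta>^|\<lambda>| (-1)^(|T| - |\<lambda>|)\<close>, so it suffices that the signed count of \<open>SVT(\<lambda>, N)\<close> is \<open>1\<close>.
  Adding or removing the largest letter \<open>N\<close> in a suitably chosen box at the bottom of its column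
  is a sign-reversing involution. Its fixed points are the tableaux in which every box at the
  bottom of its column is \<open>{N}\<close> and \<open>N\<close> occurs nowhere else. Since the boxes having a box
  below them form the diagram of \<open>(\<lambda>\<^sub>2, \<lambda>\<^sub>3, \<dots>)\<close>, deleting \<open>N\<close> is a sign-preserving bijection
  from the fixed points onto \<open>SVT((\<lambda>\<^sub>2, \<lambda>\<^sub>3, \<dots>), N - 1)\<close>, and induction on \<open>N\<close> ends
  at the empty partition.\<close>

type_synonym tableau = "nat \<times> nat \<Rightarrow> nat set"

lemma young_Cons: "young (a # l) = {1} \<times> {1..a} \<union> (\<lambda>(i, j). (i + 1, j)) ` young l"
proof (rule set_eqI)
  fix x :: "nat \<times> nat"
  obtain i j where x: "x = (i, j)" by (cases x)
  show "x \<in> young (a # l) \<longleftrightarrow> x \<in> {1} \<times> {1..a} \<union> (\<lambda>(i, j). (i + 1, j)) ` young l"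
    unfolding x young_def by (cases i) (auto simp: image_iff nth_Cons split: nat.splits)
qed

lemma young_Nil [simp]: "young [] = {}"
  by (simp add: young_def)

lemma finite_young: "finite (young lam)"
  by (induction lam) (simp_all add: young_Cons)

lemma card_young: "card (young lam) = psize lam"
proof (induction lam)
  case Nil
  then show ?case by (simp add: psize_def)
next
  case (Cons a l)
  have inj: "inj_on (\<lambda>(i, j). (i + 1, j)) (young l)"
    by (auto simp: inj_on_def)
  have "card (young (a # l)) = card ({1::nat} \<times> {1..a}) + card ((\<lambda>(i, j). (i + 1, j)) ` young l)"
    unfolding young_Cons
    by (rule card_Un_disjoint) (use finite_young in \<open>auto simp: young_def\<close>)
  also have "\<dots> = a + psize l"
    using card_image[OF inj] Cons by simp
  finally show ?case by (simp add: psize_def)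
qed

lemma is_partition_tl: "is_partition lam \<Longrightarrow> is_partition (tl lam)"
  unfolding is_partition_def by (cases lam) auto

lemma young_tl:
  assumes "is_partition lam"
  shows "young (tl lam) = {(i, j). (i, j) \<in> young lam \<and> (i + 1, j) \<in> young lam}"
proof -
  have "lam ! i \<le> lam ! (i - 1)" if "1 \<le> i" "i < length lam" for i
    using assms that sorted_wrt_nth_less[of "(\<ge>)" lam "i - 1" i]
    by (simp add: is_partition_def)
  then have "(i, j) \<in> young (tl lam) \<longleftrightarrow> (i, j) \<in> young lam \<and> (i + 1, j) \<in> young lam" for i j
    unfolding young_def by (auto simp: nth_tl intro: order.trans)
  then show ?thesis by auto
qed

lemma young_left_neighbour: "(i, j + 1) \<in> young lam \<Longrightarrow> 1 \<le> j \<Longrightarrow> (i, j) \<in> young lam"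
  by (auto simp: young_def)

lemma SVT_outside: "T \<in> SVT lam N \<Longrightarrow> b \<notin> young lam \<Longrightarrow> T b = {}"
  unfolding SVT_def by (cases b) auto

lemma SVT_subset: "T \<in> SVT lam N \<Longrightarrow> T b \<subseteq> {1..N}"
  using SVT_outside[of T lam N b] unfolding SVT_def by (cases "b \<in> young lam") auto

lemma SVT_finite: "T \<in> SVT lam N \<Longrightarrow> finite (T b)"
  by (meson SVT_subset finite_atLeastAtMost finite_subset)

lemma SVT_nonempty: "T \<in> SVT lam N \<Longrightarrow> b \<in> young lam \<Longrightarrow> T b \<noteq> {}"
  unfolding SVT_def by auto

lemma SVT_Max_le:
  assumes "T \<in> SVT lam N" and "b \<in> young lam"
  shows "Max (T b) \<le> N"
  using Max_in[OF SVT_finite SVT_nonempty, OF assms(1) assms] SVT_subset[OF assms(1), of b] by auto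

lemma SVT_row:
  "T \<in> SVT lam N \<Longrightarrow> (i, j) \<in> young lam \<Longrightarrow> (i, j + 1) \<in> young lam \<Longrightarrow>
     Max (T (i, j)) \<le> Min (T (i, j + 1))"
  unfolding SVT_def by auto

lemma SVT_column:
  "T \<in> SVT lam N \<Longrightarrow> (i, j) \<in> young lam \<Longrightarrow> (i + 1, j) \<in> young lam \<Longrightarrow>
     Max (T (i, j)) < Min (T (i + 1, j))"
  unfolding SVT_def by auto

lemma finite_SVT: "finite (SVT lam N)"
proof -
  let ?extend = "\<lambda>f b. if b \<in> young lam then f b else {}"
  have "SVT lam N \<subseteq> ?extend ` (young lam \<rightarrow>\<^sub>E Pow {1..N})"
  proof
    fix T assume T: "T \<in> SVT lam N"
    then have "T = ?extend (restrict T (young lam))"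
      using SVT_outside[OF T] by (auto simp: fun_eq_iff)
    moreover have "restrict T (young lam) \<in> young lam \<rightarrow>\<^sub>E Pow {1..N}"
      using SVT_subset[OF T] by auto
    ultimately show "T \<in> ?extend ` (young lam \<rightarrow>\<^sub>E Pow {1..N})" by blast
  qed
  moreover have "finite (young lam \<rightarrow>\<^sub>E Pow {1..N})"
    by (simp add: finite_PiE finite_young)
  ultimately show ?thesis using finite_subset by blast
qed

lemma SVT_fun_upd:
  assumes T: "T \<in> SVT lam N" and b: "(i, j) \<in> young lam"
    and S: "S \<noteq> {}" "S \<subseteq> {1..N}" "Min S = Min (T (i, j))"
    and right: "(i, j + 1) \<in> young lam \<Longrightarrow> Max S \<le> Min (T (i, j + 1))"
    and below: "(i + 1, j) \<in> young lam \<Longrightarrow> Max S < Min (T (i + 1, j))"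
  shows "T((i, j) := S) \<in> SVT lam N"
  unfolding SVT_def
proof (intro CollectI conjI allI impI ballI)
  fix c assume "c \<in> young lam"
  then show "(T((i, j) := S)) c \<noteq> {}" "(T((i, j) := S)) c \<subseteq> {1..N}"
    using S SVT_nonempty[OF T] SVT_subset[OF T] by auto
next
  fix c assume "c \<notin> young lam"
  then show "(T((i, j) := S)) c = {}"
    using b SVT_outside[OF T] by auto
next
  fix i' j' assume "(i', j') \<in> young lam \<and> (i', j' + 1) \<in> young lam"
  then show "Max ((T((i, j) := S)) (i', j')) \<le> Min ((T((i, j) := S)) (i', j' + 1))"
    using SVT_row[OF T, of i' j'] right S(3) by auto
next
  fix i' j' assume "(i', j') \<in> young lam \<and> (i' + 1, j') \<in> young lam"
  then show "Max ((T((i, j) := S)) (i', j')) < Min ((T((i, j) := S)) (i' + 1, j'))"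
    using SVT_column[OF T, of i' j'] below S(3) by auto
qed

definition excess :: "nat list \<Rightarrow> tableau \<Rightarrow> nat" where
  "excess lam T = tsize lam T - psize lam"

lemma psize_le_tsize:
  assumes T: "T \<in> SVT lam N"
  shows "psize lam \<le> tsize lam T"
proof -
  have "psize lam = (\<Sum>b\<in>young lam. 1)"
    by (simp add: card_young)
  also have "\<dots> \<le> tsize lam T"
    unfolding tsize_def
    using SVT_nonempty[OF T] SVT_finite[OF T] by (intro sum_mono) (simp add: Suc_le_eq card_gt_0_iff)
  finally show ?thesis .
qed

lemma tsize_fun_upd:
  assumes "b \<in> young lam"
  shows "tsize lam (T(b := S)) + card (T b) = tsize lam T + card S"
proof -
  have "tsize lam (T(b := S)) = card S + (\<Sum>c\<in>young lam - {b}. card (T c))"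
    unfolding tsize_def using assms by (simp add: sum.remove[OF finite_young])
  moreover have "tsize lam T = card (T b) + (\<Sum>c\<in>young lam - {b}. card (T c))"
    unfolding tsize_def using assms by (simp add: sum.remove[OF finite_young])
  ultimately show ?thesis by simp
qed

lemma sum_involution_eq_sum_fixed_points:
  fixes f :: "'a \<Rightarrow> 'b::ab_group_add"
  assumes "finite S" and "\<And>x. x \<in> S \<Longrightarrow> h x \<in> S" and "\<And>x. x \<in> S \<Longrightarrow> h (h x) = x"
    and "\<And>x. x \<in> S \<Longrightarrow> h x \<noteq> x \<Longrightarrow> f (h x) = - f x"
  shows "sum f S = sum f {x \<in> S. h x = x}"
proof -
  have "sum f {x \<in> S. h x \<noteq> x} = 0"
    using assms(2-4) by (intro sum_involution_eq_0[where h = h]) (simp_all, metis)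
  moreover have "sum f S = sum f {x \<in> S. h x = x} + sum f {x \<in> S. h x \<noteq> x}"
    using assms(1) by (subst sum.union_disjoint[symmetric]) (auto intro: sum.cong)
  ultimately show ?thesis by simp
qed

definition toggle :: "nat \<Rightarrow> nat set \<Rightarrow> nat set" where
  "toggle N S = (if N \<in> S then S - {N} else insert N S)"

lemma toggle_toggle [simp]: "toggle N (toggle N S) = S"
  by (auto simp: toggle_def)

lemma toggle_neq: "toggle N S \<noteq> S"
  by (auto simp: toggle_def)

lemma card_toggle:
  "finite S \<Longrightarrow> card S = Suc (card (toggle N S)) \<or> card (toggle N S) = Suc (card S)"
  using card_gt_0_iff[of S] by (cases "N \<in> S") (auto simp: toggle_def)

lemma Min_toggle:
  assumes "finite S" and "a \<in> S" and "a < N"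
  shows "Min (toggle N S) = Min S"
proof -
  have "S \<noteq> {}"
    using assms(2) by auto
  then have "Min S \<in> S"
    using assms(1) by simp
  have "Min S < N"
    using Min_le[OF assms(1,2)] assms(3) by linarith
  with \<open>Min S \<in> S\<close> show ?thesis
    using assms by (intro Min_eqI) (auto simp: toggle_def split: if_splits)
qed

text \<open>Adding or removing the largest letter \<open>N\<close> in such a box keeps \<open>T\<close> a set-valued
  tableau: no box lies below it, its minimum (a letter below \<open>N\<close>) does not change, and its
  maximum stays at most \<open>N\<close>, which is all that a right neighbour \<open>{N}\<close> requires.\<close>

definition toggle_boxes :: "nat list \<Rightarrow> nat \<Rightarrow> tableau \<Rightarrow> (nat \<times> nat) set" where
  "toggle_boxes lam N T = {(i, j). (i, j) \<in> young lam \<and> (i + 1, j) \<notin> young lam \<and>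
     T (i, j) - {N} \<noteq> {} \<and> ((i, j + 1) \<notin> young lam \<or> T (i, j + 1) = {N})}"

lemma toggle_boxes_fun_upd_toggle:
  assumes "b \<in> toggle_boxes lam N T"
  shows "toggle_boxes lam N (T(b := toggle N (T b))) = toggle_boxes lam N T"
proof -
  have "T b - {N} \<noteq> {}"
    using assms by (auto simp: toggle_boxes_def)
  then have "(T(b := toggle N (T b))) c - {N} = T c - {N}"
    and "(T(b := toggle N (T b))) c = {N} \<longleftrightarrow> T c = {N}" for c
    by (auto simp: toggle_def)
  then show ?thesis
    unfolding toggle_boxes_def by (simp only:)
qed

lemma SVT_fun_upd_toggle:
  assumes T: "T \<in> SVT lam N" and "b \<in> toggle_boxes lam N T"
  shows "T(b := toggle N (T b)) \<in> SVT lam N"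
proof -
  obtain i j where b: "b = (i, j)" by (cases b)
  have ij: "(i, j) \<in> young lam" "(i + 1, j) \<notin> young lam" "T (i, j) - {N} \<noteq> {}"
    "(i, j + 1) \<notin> young lam \<or> T (i, j + 1) = {N}"
    using assms(2) by (auto simp: b toggle_boxes_def)
  then obtain a where a: "a \<in> T (i, j)" "a \<noteq> N" by auto
  have "a \<in> {1..N}" using a SVT_subset[OF T, of "(i, j)"] by auto
  let ?S = "toggle N (T (i, j))"
  have S: "?S \<noteq> {}" "?S \<subseteq> {1..N}"
    using a \<open>a \<in> {1..N}\<close> SVT_subset[OF T, of "(i, j)"] by (auto simp: toggle_def)
  have "Max ?S \<le> N"
    using S Max_in[of ?S] finite_subset[OF S(2)] by auto
  show ?thesis
    unfolding b
  proof (rule SVT_fun_upd[OF T ij(1) S])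
    show "Min ?S = Min (T (i, j))"
      using a \<open>a \<in> {1..N}\<close> SVT_finite[OF T] by (intro Min_toggle) auto
    show "Max ?S \<le> Min (T (i, j + 1))" if "(i, j + 1) \<in> young lam"
      using ij(4) that \<open>Max ?S \<le> N\<close> by auto
    show "Max ?S < Min (T (i + 1, j))" if "(i + 1, j) \<in> young lam"
      using ij(2) that by simp
  qed
qed

text \<open>Toggling leaves the set of toggle boxes unchanged, so the choice of the box is immaterial
  for the involution property.\<close>

definition toggle_tableau :: "nat list \<Rightarrow> nat \<Rightarrow> tableau \<Rightarrow> tableau" where
  "toggle_tableau lam N T =
     (if toggle_boxes lam N T = {} then T
      else let b = SOME b. b \<in> toggle_boxes lam N T in T(b := toggle N (T b)))"

lemma toggle_tableau_eq:
  assumes "toggle_boxes lam N T \<noteq> {}"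
  defines "b \<equiv> SOME b. b \<in> toggle_boxes lam N T"
  shows "b \<in> toggle_boxes lam N T" and "toggle_tableau lam N T = T(b := toggle N (T b))"
  using assms by (simp_all add: toggle_tableau_def some_in_eq Let_def)

lemma SVT_toggle_tableau: "T \<in> SVT lam N \<Longrightarrow> toggle_tableau lam N T \<in> SVT lam N"
  using toggle_tableau_eq SVT_fun_upd_toggle by (cases "toggle_boxes lam N T = {}")
    (simp_all add: toggle_tableau_def)

lemma toggle_tableau_toggle_tableau: "toggle_tableau lam N (toggle_tableau lam N T) = T"
proof (cases "toggle_boxes lam N T = {}")
  case True
  then show ?thesis by (simp add: toggle_tableau_def)
next
  case False
  note b = toggle_tableau_eq[OF False]
  have "toggle_boxes lam N (toggle_tableau lam N T) = toggle_boxes lam N T"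
    unfolding b(2) using b(1) by (rule toggle_boxes_fun_upd_toggle)
  then show ?thesis
    using False unfolding toggle_tableau_def[of lam N "toggle_tableau lam N T"] by (simp add: b(2))
qed

lemma toggle_tableau_eq_self_iff: "toggle_tableau lam N T = T \<longleftrightarrow> toggle_boxes lam N T = {}"
proof (cases "toggle_boxes lam N T = {}")
  case False
  note b = toggle_tableau_eq[OF False]
  have "toggle_tableau lam N T \<noteq> T"
    unfolding b(2) using toggle_neq by (metis fun_upd_same)
  then show ?thesis using False by simp
qed (simp add: toggle_tableau_def)

lemma sign_toggle_tableau:
  assumes T: "T \<in> SVT lam N" and "toggle_boxes lam N T \<noteq> {}"
  shows "(-1) ^ excess lam (toggle_tableau lam N T) = - ((-1 :: 'a :: ring_1) ^ excess lam T)"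
proof -
  define b where "b = (SOME b. b \<in> toggle_boxes lam N T)"
  let ?T' = "toggle_tableau lam N T"
  have b: "b \<in> toggle_boxes lam N T" and T': "?T' = T(b := toggle N (T b))"
    using toggle_tableau_eq[OF assms(2)] by (simp_all add: b_def)
  have "b \<in> young lam"
    using b by (cases b) (simp add: toggle_boxes_def)
  then have "tsize lam ?T' + card (T b) = tsize lam T + card (toggle N (T b))"
    unfolding T' by (rule tsize_fun_upd)
  moreover have "card (T b) = Suc (card (toggle N (T b))) \<or> card (toggle N (T b)) = Suc (card (T b))"
    using SVT_finite[OF T] by (rule card_toggle)
  moreover have "psize lam \<le> tsize lam T" "psize lam \<le> tsize lam ?T'"
    using psize_le_tsize T SVT_toggle_tableau[OF T] by blast+
  ultimately have "excess lam T = Suc (excess lam ?T') \<or> excess lam ?T' = Suc (excess lam T)"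
    unfolding excess_def by linarith
  then show ?thesis by auto
qed

lemma alternating_sum_SVT_eq_fixed_points:
  "(\<Sum>T\<in>SVT lam N. (-1 :: 'a :: ring_1) ^ excess lam T)
     = (\<Sum>T\<in>{T \<in> SVT lam N. toggle_boxes lam N T = {}}. (-1) ^ excess lam T)"
proof -
  have "(\<Sum>T\<in>SVT lam N. (-1 :: 'a) ^ excess lam T)
     = (\<Sum>T\<in>{T \<in> SVT lam N. toggle_tableau lam N T = T}. (-1) ^ excess lam T)"
    by (rule sum_involution_eq_sum_fixed_points)
      (simp_all add: finite_SVT SVT_toggle_tableau toggle_tableau_toggle_tableau
        toggle_tableau_eq_self_iff sign_toggle_tableau)
  then show ?thesis
    by (simp add: toggle_tableau_eq_self_iff)
qed

lemma SVT_notin_above: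
  assumes T: "T \<in> SVT lam N" and "(i, j) \<in> young lam" and "(i + 1, j) \<in> young lam"
  shows "N \<notin> T (i, j)"
proof
  assume "N \<in> T (i, j)"
  then have "N \<le> Max (T (i, j))"
    using SVT_finite[OF T] by simp
  also have "\<dots> < Min (T (i + 1, j))"
    using SVT_column[OF T assms(2,3)] .
  also have "\<dots> \<le> N"
    using Min_in[OF SVT_finite[OF T] SVT_nonempty[OF T assms(3)]] SVT_subset[OF T, of "(i + 1, j)"]
    by auto
  finally show False by simp
qed

text \<open>Induction from the right end of the row: the right neighbour of a box at the bottom of
  its column is again at the bottom of its column.\<close>

lemma SVT_bottom_eq_singleton:
  assumes T: "T \<in> SVT lam N" and no_toggle: "toggle_boxes lam N T = {}"
  shows "(i, j) \<in> young lam \<Longrightarrow> (i + 1, j) \<notin> young lam \<Longrightarrow> T (i, j) = {N}"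
proof (induction "lam ! (i - 1) - j" arbitrary: j rule: less_induct)
  case (less j)
  have "T (i, j + 1) = {N}" if right: "(i, j + 1) \<in> young lam"
  proof -
    have "1 \<le> j" "j + 1 \<le> lam ! (i - 1)"
      using less.prems(1) right by (simp_all add: young_def)
    moreover have "(i + 1, j + 1) \<notin> young lam"
      using young_left_neighbour[of "i + 1" j lam] less.prems(2) \<open>1 \<le> j\<close> by blast
    ultimately show ?thesis
      using less.hyps[of "j + 1"] right by simp
  qed
  then have "T (i, j) - {N} = {}"
    using no_toggle less.prems unfolding toggle_boxes_def by blast
  then show ?case
    using SVT_nonempty[OF T less.prems(1)] by blast
qed

definition delete_entry :: "nat \<Rightarrow> tableau \<Rightarrow> tableau" where
  "delete_entry N T = (\<lambda>b. T b - {N})"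

definition fill_bottom :: "nat list \<Rightarrow> nat \<Rightarrow> tableau \<Rightarrow> tableau" where
  "fill_bottom lam N T = (\<lambda>b. if b \<in> young lam - young (tl lam) then {N} else T b)"

lemma SVT_delete_entry:
  assumes lam: "is_partition lam" and T: "T \<in> SVT lam (Suc n)"
    and no_toggle: "toggle_boxes lam (Suc n) T = {}"
  shows "delete_entry (Suc n) T \<in> SVT (tl lam) n"
proof -
  note young_tl = young_tl[OF lam]
  have keep: "T b - {Suc n} = T b" if "b \<in> young (tl lam)" for b
    using that SVT_notin_above[OF T] young_tl by auto
  show ?thesis
    unfolding SVT_def
  proof (intro CollectI conjI allI impI ballI)
    fix b assume "b \<in> young (tl lam)"
    then show "delete_entry (Suc n) T b \<noteq> {}"
      using keep SVT_nonempty[OF T] young_tl by (auto simp: delete_entry_def)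
    show "delete_entry (Suc n) T b \<subseteq> {1..n}"
      using SVT_subset[OF T, of b] by (auto simp: delete_entry_def)
  next
    fix b assume b: "b \<notin> young (tl lam)"
    show "delete_entry (Suc n) T b = {}"
    proof (cases "b \<in> young lam")
      case True
      with b have "T b = {Suc n}"
        using SVT_bottom_eq_singleton[OF T no_toggle] young_tl by (cases b) auto
      then show ?thesis by (simp add: delete_entry_def)
    qed (simp add: delete_entry_def SVT_outside[OF T])
  next
    fix i j assume "(i, j) \<in> young (tl lam) \<and> (i, j + 1) \<in> young (tl lam)"
    then show "Max (delete_entry (Suc n) T (i, j)) \<le> Min (delete_entry (Suc n) T (i, j + 1))"
      using keep SVT_row[OF T, of i j] young_tl by (simp add: delete_entry_def)
  next
    fix i j assume "(i, j) \<in> young (tl lam) \<and> (i + 1, j) \<in> young (tl lam)"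
    then show "Max (delete_entry (Suc n) T (i, j)) < Min (delete_entry (Suc n) T (i + 1, j))"
      using keep SVT_column[OF T, of i j] young_tl by (simp add: delete_entry_def)
  qed
qed

lemma SVT_fill_bottom:
  assumes lam: "is_partition lam" and T: "T \<in> SVT (tl lam) n"
  shows "fill_bottom lam (Suc n) T \<in> SVT lam (Suc n)"
proof -
  note young_tl = young_tl[OF lam]
  let ?F = "fill_bottom lam (Suc n) T"
  have Max_le: "Max (?F b) \<le> Suc n" if "b \<in> young lam" for b
    using SVT_Max_le[OF T, of b] that by (auto simp: fill_bottom_def)
  show ?thesis
    unfolding SVT_def
  proof (intro CollectI conjI allI impI ballI)
    fix b assume "b \<in> young lam"
    then show "?F b \<noteq> {}" "?F b \<subseteq> {1..Suc n}"
      using SVT_nonempty[OF T, of b] SVT_subset[OF T, of b] by (auto simp: fill_bottom_def)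
  next
    fix b assume "b \<notin> young lam"
    then have "b \<notin> young (tl lam)"
      using young_tl by auto
    with \<open>b \<notin> young lam\<close> show "?F b = {}"
      using SVT_outside[OF T] by (simp add: fill_bottom_def)
  next
    fix i j assume ij: "(i, j) \<in> young lam \<and> (i, j + 1) \<in> young lam"
    show "Max (?F (i, j)) \<le> Min (?F (i, j + 1))"
    proof (cases "(i, j + 1) \<in> young (tl lam)")
      case True
      moreover have "1 \<le> j"
        using ij by (simp add: young_def)
      ultimately show ?thesis
        using young_left_neighbour SVT_row[OF T] by (simp add: fill_bottom_def)
    next
      case False
      then show ?thesis
        using Max_le ij by (simp add: fill_bottom_def)
    qed
  next
    fix i j assume ij: "(i, j) \<in> young lam \<and> (i + 1, j) \<in> young lam"
    then have "(i, j) \<in> young (tl lam)"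
      using young_tl by simp
    show "Max (?F (i, j)) < Min (?F (i + 1, j))"
    proof (cases "(i + 1, j) \<in> young (tl lam)")
      case True
      with \<open>(i, j) \<in> young (tl lam)\<close> show ?thesis
        using SVT_column[OF T] by (simp add: fill_bottom_def)
    next
      case False
      with \<open>(i, j) \<in> young (tl lam)\<close> show ?thesis
        using SVT_Max_le[OF T] ij by (simp add: fill_bottom_def less_Suc_eq_le)
    qed
  qed
qed

lemma toggle_boxes_fill_bottom:
  "is_partition lam \<Longrightarrow> toggle_boxes lam N (fill_bottom lam N T) = {}"
  using young_tl by (auto simp: toggle_boxes_def fill_bottom_def)

lemma bij_betw_delete_entry:
  assumes lam: "is_partition lam"
  shows "bij_betw (delete_entry (Suc n))
    {T \<in> SVT lam (Suc n). toggle_boxes lam (Suc n) T = {}} (SVT (tl lam) n)"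
proof (rule bij_betw_byWitness[where f' = "fill_bottom lam (Suc n)"])
  show "\<forall>T \<in> {T \<in> SVT lam (Suc n). toggle_boxes lam (Suc n) T = {}}.
    fill_bottom lam (Suc n) (delete_entry (Suc n) T) = T"
  proof (intro ballI ext)
    fix T and b :: "nat \<times> nat"
    assume "T \<in> {T \<in> SVT lam (Suc n). toggle_boxes lam (Suc n) T = {}}"
    then have T: "T \<in> SVT lam (Suc n)" and no_toggle: "toggle_boxes lam (Suc n) T = {}"
      by simp_all
    obtain i j where b: "b = (i, j)" by (cases b)
    show "fill_bottom lam (Suc n) (delete_entry (Suc n) T) b = T b"
      using SVT_bottom_eq_singleton[OF T no_toggle, of i j] SVT_notin_above[OF T, of i j]
        SVT_outside[OF T, of b] young_tl[OF lam]
      by (auto simp: b fill_bottom_def delete_entry_def)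
  qed
  show "\<forall>T \<in> SVT (tl lam) n. delete_entry (Suc n) (fill_bottom lam (Suc n) T) = T"
  proof (intro ballI ext)
    fix T and b :: "nat \<times> nat"
    assume T: "T \<in> SVT (tl lam) n"
    show "delete_entry (Suc n) (fill_bottom lam (Suc n) T) b = T b"
      using SVT_subset[OF T, of b] SVT_outside[OF T, of b]
      by (auto simp: fill_bottom_def delete_entry_def)
  qed
  show "delete_entry (Suc n) ` {T \<in> SVT lam (Suc n). toggle_boxes lam (Suc n) T = {}}
    \<subseteq> SVT (tl lam) n"
    using SVT_delete_entry[OF lam] by auto
  show "fill_bottom lam (Suc n) ` SVT (tl lam) n
    \<subseteq> {T \<in> SVT lam (Suc n). toggle_boxes lam (Suc n) T = {}}"
    using SVT_fill_bottom[OF lam] toggle_boxes_fill_bottom[OF lam] by auto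
qed

lemma excess_delete_entry:
  assumes lam: "is_partition lam" and T: "T \<in> SVT lam (Suc n)"
    and no_toggle: "toggle_boxes lam (Suc n) T = {}"
  shows "excess (tl lam) (delete_entry (Suc n) T) = excess lam T"
proof -
  let ?B = "young lam - young (tl lam)"
  have sub: "young (tl lam) \<subseteq> young lam"
    using young_tl[OF lam] by auto
  have "tsize lam T = (\<Sum>b\<in>?B. card (T b)) + (\<Sum>b\<in>young (tl lam). card (T b))"
    unfolding tsize_def by (rule sum.subset_diff[OF sub finite_young])
  also have "(\<Sum>b\<in>?B. card (T b)) = card ?B"
  proof -
    have "T b = {Suc n}" if "b \<in> ?B" for b
      using that SVT_bottom_eq_singleton[OF T no_toggle] young_tl[OF lam] by (cases b) auto
    then show ?thesis by simp
  qed
  also have "(\<Sum>b\<in>young (tl lam). card (T b)) = tsize (tl lam) (delete_entry (Suc n) T)"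
    unfolding tsize_def delete_entry_def
    using SVT_notin_above[OF T] young_tl[OF lam] by (intro sum.cong) auto
  finally have "tsize lam T = card ?B + tsize (tl lam) (delete_entry (Suc n) T)" .
  moreover have "psize lam = card ?B + psize (tl lam)"
    using card_young[of lam] card_young[of "tl lam"] card_Diff_subset[OF finite_young sub]
      card_mono[OF finite_young sub] by simp
  ultimately show ?thesis
    by (simp add: excess_def)
qed

lemma alternating_sum_SVT_Suc:
  assumes "is_partition lam"
  shows "(\<Sum>T\<in>SVT lam (Suc n). (-1 :: 'a :: ring_1) ^ excess lam T)
    = (\<Sum>T\<in>SVT (tl lam) n. (-1) ^ excess (tl lam) T)"
proof -
  have "(\<Sum>T\<in>SVT lam (Suc n). (-1 :: 'a) ^ excess lam T)
      = (\<Sum>T\<in>{T \<in> SVT lam (Suc n). toggle_boxes lam (Suc n) T = {}}.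
          (-1) ^ excess (tl lam) (delete_entry (Suc n) T))"
    unfolding alternating_sum_SVT_eq_fixed_points
    using excess_delete_entry[OF assms] by (intro sum.cong) auto
  also have "\<dots> = (\<Sum>T\<in>SVT (tl lam) n. (-1) ^ excess (tl lam) T)"
    by (rule sum.reindex_bij_betw[OF bij_betw_delete_entry[OF assms]])
  finally show ?thesis .
qed

lemma alternating_sum_SVT:
  "is_partition lam \<Longrightarrow> length lam \<le> n \<Longrightarrow> (\<Sum>T\<in>SVT lam n. (-1 :: 'a :: ring_1) ^ excess lam T) = 1"
proof (induction n arbitrary: lam)
  case 0
  then have "SVT lam 0 = {\<lambda>_. {}}"
    by (auto simp: SVT_def fun_eq_iff)
  with 0 show ?case
    by (simp add: excess_def tsize_def psize_def)
next
  case (Suc n)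
  then show ?case
    by (simp add: alternating_sum_SVT_Suc is_partition_tl)
qed

lemma sum_omega_eq_tsize:
  assumes T: "T \<in> SVT lam n"
  shows "(\<Sum>k=1..n. omega lam T k) = tsize lam T"
proof -
  have "(\<Sum>k=1..n. omega lam T k) = (\<Sum>k\<in>{1..n}. \<Sum>b\<in>{b \<in> young lam. k \<in> T b}. 1)"
    by (simp add: omega_def)
  also have "\<dots> = (\<Sum>b\<in>young lam. \<Sum>k\<in>{k \<in> {1..n}. k \<in> T b}. 1)"
    by (rule sum.swap_restrict) (simp_all add: finite_young)
  also have "\<dots> = tsize lam T"
  proof -
    have "{k \<in> {1..n}. k \<in> T b} = T b" for b
      using SVT_subset[OF T, of b] by auto
    then show ?thesis by (simp add: tsize_def)
  qed
  finally show ?thesis .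
qed

lemma stableG_const_minus_inverse:
  fixes \<beta> :: complex
  assumes "\<beta> \<noteq> 0"
  shows "stableG lam n (\<lambda>_. \<beta>) (- inverse \<beta>) = \<beta> ^ psize lam * (\<Sum>T\<in>SVT lam n. (-1) ^ excess lam T)"
  unfolding stableG_def sum_distrib_left
proof (rule sum.cong[OF refl])
  fix T assume T: "T \<in> SVT lam n"
  have "(\<Prod>k=1..n. \<beta> ^ omega lam T k) = \<beta> ^ tsize lam T"
    by (simp only: power_sum[symmetric] sum_omega_eq_tsize[OF T])
  also have "\<dots> = \<beta> ^ psize lam * \<beta> ^ excess lam T"
    using psize_le_tsize[OF T] by (simp add: excess_def power_add[symmetric])
  moreover have "(- inverse \<beta>) ^ excess lam T * \<beta> ^ excess lam T = (-1) ^ excess lam T"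
    using assms by (simp flip: power_mult_distrib)
  ultimately show "(- inverse \<beta>) ^ (tsize lam T - psize lam) * (\<Prod>k=1..n. \<beta> ^ omega lam T k)
      = \<beta> ^ psize lam * (-1) ^ excess lam T"
    unfolding excess_def[symmetric] by (metis mult.left_commute)
qed

theorem theoremA1:
  fixes n :: nat and lam :: "nat list" and \<beta> :: complex
  assumes "0 < n" and "is_partition lam" and "length lam \<le> n" and "\<beta> \<noteq> 0"
  shows "stableG lam n (\<lambda>_. \<beta>) (- inverse \<beta>) = \<beta> ^ psize lam"
  using stableG_const_minus_inverse[OF assms(4)] alternating_sum_SVT[OF assms(2,3), where 'a = complex]
  by simp

end
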